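(* There is a universal constant $c_0$ such that the following holds. Let $\bm{a}_1,\dots,\bm{a}_N\in\mathbb{C}^D$ be i.i.d. uniform on the sphere $\{\bm{x}\in\mathbb{C}^D:\|\bm{x}\|_2=\sqrt{D}\}$, with $a_{k,i}$ the $i$-th entry of $\bm{a}_k$, and let $\bm{\gamma}^{\natural}\in\mathbb{R}^N$ be nonnegative and supported on $S^{\natural}\subset[N]$. If $8\log(DN)<D<\infty$, then with probability at least $1-\frac{c_0}{D\sqrt{D}}$ both $$\left|\frac1D\bm{a}_k^*\bm{a}_\ell\right|\le\sqrt{\frac{32\log(DN)}{D}}\quad\text{for all }k\ne\ell,$$ and $$\sum_{\ell\in S^{\natural}}\gamma^{\natural}_\ell\left|\sum_{i=1}^D\overline{a}_{k,i}a_{\ell,i}\right|^2\le\sum_{\ell\in S^{\natural}}32\gamma^{\natural}_\ell D\log(DN)\quad\text{for all }k\notin S^{\natural}$$ hold. *)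

theory Defs
  imports "HOL-Probability.Probability"
begin

text \<open>Vectors in C^D are represented as functions nat => complex, indexed by {0..<D}
  (extensional outside), carried by the product measure space.\<close>

definition cvec_norm :: "nat \<Rightarrow> (nat \<Rightarrow> complex) \<Rightarrow> real" where
  "cvec_norm D x = sqrt (\<Sum>i<D. (cmod (x i))\<^sup>2)"

definition Leb_C :: "nat \<Rightarrow> (nat \<Rightarrow> complex) measure" where
  "Leb_C D = PiM {..<D} (\<lambda>_. lborel)"

text \<open>Uniform (normalised surface) measure on the sphere {x in C^D. norm x = sqrt D},
  realised as the cone measure: push forward the uniform distribution on the unit ball
  under radial projection x |-> sqrt D * x / norm x.\<close>
definition unif_sphere_C :: "nat \<Rightarrow> (nat \<Rightarrow> complex) measure" where
  "unif_sphere_C D =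
     distr (uniform_measure (Leb_C D) {x \<in> space (Leb_C D). cvec_norm D x \<le> 1})
           (Leb_C D)
           (\<lambda>x. \<lambda>i\<in>{..<D}. complex_of_real (sqrt (real D) / cvec_norm D x) * x i)"

definition iid_sphere :: "nat \<Rightarrow> nat \<Rightarrow> (nat \<Rightarrow> nat \<Rightarrow> complex) measure" where
  "iid_sphere N D = PiM {..<N} (\<lambda>_. unif_sphere_C D)"

end

(*
  Both events follow from |a_k^* a_l|^2 <= 32 D log(DN) for all k ~= l, so by a union bound over
  the at most N^2 pairs it suffices to bound the probability that a single pair violates this.
  Conditioning on a_k, that is an event for a_l alone which is invariant under positive scaling,
  i.e. a cone. The sphere measure is the radial image of the uniform measure on the unit ball, and
  by the layer-cake formula both agree on cones with the Gaussian measure exp(-|x|^2) dx / pi^D.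
  For Gaussian x the cone condition forces either |x|^2 <= D/4, of probability at most
  (e^(3/4)/4)^D, or one of the four half-planes Re(c <a_k, x>) >= s with c in {1, -1, i, -i}, each
  of probability at most (DN)^-4; both are Chernoff bounds. When 8 log(DN) < D, N^2 times their
  sum is at most 5 D^(-3/2).
*)

theory Submission
  imports Defs
begin

section \<open>Gaussian integrals on the complex plane\<close>

lemma cmod_power2_eq_sum_Basis: "(cmod z)\<^sup>2 = (\<Sum>b\<in>Basis. (z \<bullet> b)\<^sup>2)"
  by (simp add: Basis_complex_def cmod_power2 inner_complex_def)

lemma nn_integral_exp_neg_power2: "(\<integral>\<^sup>+x. ennreal (exp (- x\<^sup>2)) \<partial>lborel) = ennreal (sqrt pi)"
proof -
  interpret N: prob_space "density lborel (normal_density 0 (1 / sqrt 2))"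
    by (rule prob_space_normal_density) simp
  have "1 = (\<integral>\<^sup>+x. ennreal (normal_density 0 (1 / sqrt 2) x) \<partial>lborel)"
    using N.emeasure_space_1 by (simp add: emeasure_density)
  also have "\<dots> = ennreal (1 / sqrt pi) * (\<integral>\<^sup>+x. ennreal (exp (- x\<^sup>2)) \<partial>lborel)"
    by (subst nn_integral_cmult[symmetric])
       (auto intro!: nn_integral_cong simp: normal_density_def ennreal_mult[symmetric] real_sqrt_divide power_divide)
  finally have "ennreal (sqrt pi) * ennreal (1 / sqrt pi) * (\<integral>\<^sup>+x. ennreal (exp (- x\<^sup>2)) \<partial>lborel)
      = ennreal (sqrt pi)"
    by (simp add: mult.assoc)
  moreover have "ennreal (sqrt pi) * ennreal (1 / sqrt pi) = 1"
    by (simp add: ennreal_mult[symmetric])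
  ultimately show ?thesis by simp
qed

lemma nn_integral_exp_neg_cmod_power2:
  "(\<integral>\<^sup>+z. ennreal (exp (- (cmod z)\<^sup>2)) \<partial>(lborel::complex measure)) = ennreal pi"
proof -
  have "(\<integral>\<^sup>+z. ennreal (exp (- (cmod z)\<^sup>2)) \<partial>(lborel::complex measure))
      = (\<integral>\<^sup>+z. (\<Prod>b\<in>Basis. ennreal (exp (- (z \<bullet> b)\<^sup>2))) \<partial>(lborel::complex measure))"
    by (intro nn_integral_cong)
       (simp add: cmod_power2_eq_sum_Basis Basis_complex_def ennreal_mult[symmetric] exp_add[symmetric] exp_diff)
  also have "\<dots> = (\<Prod>b\<in>(Basis::complex set). \<integral>\<^sup>+x. ennreal (exp (- x\<^sup>2)) \<partial>lborel)"
    by (rule nn_integral_lborel_prod) auto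
  finally show ?thesis
    by (simp add: nn_integral_exp_neg_power2 Basis_complex_def ennreal_mult[symmetric])
qed

lemma nn_integral_exp_neg_scaled_cmod_power2:
  assumes "0 < a"
  shows "(\<integral>\<^sup>+z. ennreal (exp (- a * (cmod z)\<^sup>2)) \<partial>(lborel::complex measure)) = ennreal (pi / a)"
proof -
  have "ennreal pi = (\<integral>\<^sup>+z. ennreal (exp (- (cmod z)\<^sup>2)) \<partial>(lborel::complex measure))"
    by (rule nn_integral_exp_neg_cmod_power2[symmetric])
  also have "\<dots> = (\<integral>\<^sup>+z. ennreal a * ennreal (exp (- a * (cmod z)\<^sup>2)) \<partial>lborel)"
    using assms
    by (subst lborel_affine[of "sqrt a" 0])
       (auto simp: nn_integral_density nn_integral_distr power_mult_distrib norm_mult)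
  also have "\<dots> = ennreal a * (\<integral>\<^sup>+z. ennreal (exp (- a * (cmod z)\<^sup>2)) \<partial>lborel)"
    by (simp add: nn_integral_cmult)
  finally have "ennreal a * ennreal (pi / a) = ennreal a * (\<integral>\<^sup>+z. ennreal (exp (- a * (cmod z)\<^sup>2)) \<partial>lborel)"
    using assms by (simp add: ennreal_mult[symmetric])
  then show ?thesis
    using assms by (simp add: ennreal_mult_cancel_left)
qed

lemma nn_integral_lborel_complex_translate:
  fixes f :: "complex \<Rightarrow> ennreal"
  assumes [measurable]: "f \<in> borel_measurable borel"
  shows "(\<integral>\<^sup>+z. f (t + z) \<partial>lborel) = (\<integral>\<^sup>+z. f z \<partial>lborel)"
proof -
  have "(\<integral>\<^sup>+z. f z \<partial>lborel) = (\<integral>\<^sup>+z. f z \<partial>distr lborel borel ((+) t))"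
    by (simp add: lborel_distr_plus)
  also have "\<dots> = (\<integral>\<^sup>+z. f (t + z) \<partial>lborel)"
    by (simp add: nn_integral_distr)
  finally show ?thesis ..
qed

lemma nn_integral_exp_Re_mult_minus_cmod_power2:
  "(\<integral>\<^sup>+z. ennreal (exp (Re (c * z) - (cmod z)\<^sup>2)) \<partial>(lborel::complex measure))
     = ennreal (pi * exp ((cmod c)\<^sup>2 / 4))"
proof -
  have complete_square:
    "exp (Re (c * z) - (cmod z)\<^sup>2) = exp ((cmod c)\<^sup>2 / 4) * exp (- (cmod (- (cnj c / 2) + z))\<^sup>2)" for z
  proof -
    have "Re (c * z) - (cmod z)\<^sup>2 = (cmod c)\<^sup>2 / 4 - (cmod (- (cnj c / 2) + z))\<^sup>2"
      by (simp only: cmod_power2) (simp add: power2_eq_square algebra_simps)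
    then show ?thesis
      by (simp only: exp_diff exp_minus divide_inverse)
  qed
  have "(\<integral>\<^sup>+z. ennreal (exp (Re (c * z) - (cmod z)\<^sup>2)) \<partial>(lborel::complex measure))
     = (\<integral>\<^sup>+z. ennreal (exp ((cmod c)\<^sup>2 / 4)) * ennreal (exp (- (cmod (- (cnj c / 2) + z))\<^sup>2)) \<partial>lborel)"
    by (intro nn_integral_cong) (simp only: complete_square, rule ennreal_mult; simp)
  also have "\<dots> = ennreal (exp ((cmod c)\<^sup>2 / 4))
      * (\<integral>\<^sup>+z. ennreal (exp (- (cmod (- (cnj c / 2) + z))\<^sup>2)) \<partial>lborel)"
    by (simp add: nn_integral_cmult)
  also have "(\<integral>\<^sup>+z. ennreal (exp (- (cmod (- (cnj c / 2) + z))\<^sup>2)) \<partial>lborel) = ennreal pi"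
    using nn_integral_lborel_complex_translate[of "\<lambda>z. ennreal (exp (- (cmod z)\<^sup>2))" "- (cnj c / 2)"]
    by (simp add: nn_integral_exp_neg_cmod_power2)
  finally show ?thesis by (simp add: ennreal_mult[symmetric] mult.commute)
qed

section \<open>The Gaussian measure on C^D\<close>

definition cvec_sqnorm :: "nat \<Rightarrow> (nat \<Rightarrow> complex) \<Rightarrow> real" where
  "cvec_sqnorm D x = (\<Sum>i<D. (cmod (x i))\<^sup>2)"

definition cvec_inner :: "nat \<Rightarrow> (nat \<Rightarrow> complex) \<Rightarrow> (nat \<Rightarrow> complex) \<Rightarrow> complex" where
  "cvec_inner D u x = (\<Sum>i<D. cnj (u i) * x i)"

definition cvec_scale :: "nat \<Rightarrow> real \<Rightarrow> (nat \<Rightarrow> complex) \<Rightarrow> nat \<Rightarrow> complex" where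
  "cvec_scale D r x = (\<lambda>i\<in>{..<D}. r *\<^sub>R x i)"

lemma cvec_sqnorm_nonneg: "0 \<le> cvec_sqnorm D x"
  by (simp add: cvec_sqnorm_def sum_nonneg)

lemma cvec_norm_eq_sqrt_sqnorm: "cvec_norm D x = sqrt (cvec_sqnorm D x)"
  by (simp add: cvec_norm_def cvec_sqnorm_def)

lemma cvec_sqnorm_scale: "cvec_sqnorm D (cvec_scale D r x) = r\<^sup>2 * cvec_sqnorm D x"
  by (simp add: cvec_sqnorm_def cvec_scale_def sum_distrib_left power_mult_distrib)

lemma cvec_inner_scale: "cvec_inner D u (cvec_scale D r x) = r *\<^sub>R cvec_inner D u x"
  by (simp add: cvec_inner_def cvec_scale_def scaleR_sum_right)

lemma cvec_inner_eq_0_if_sqnorm_eq_0: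
  assumes "cvec_sqnorm D u = 0"
  shows "cvec_inner D u x = 0"
proof -
  have "\<forall>i\<in>{..<D}. (cmod (u i))\<^sup>2 = 0"
    using assms unfolding cvec_sqnorm_def by (subst sum_nonneg_eq_0_iff[symmetric]) auto
  then show ?thesis by (simp add: cvec_inner_def)
qed

lemma cvec_scale_in_space: "cvec_scale D r x \<in> space (Leb_C D)"
  by (simp add: cvec_scale_def Leb_C_def space_PiM)

lemma borel_measurable_cvec_sqnorm[measurable]: "cvec_sqnorm D \<in> borel_measurable (Leb_C D)"
  unfolding cvec_sqnorm_def Leb_C_def by measurable

lemma borel_measurable_cvec_inner[measurable]: "cvec_inner D u \<in> borel_measurable (Leb_C D)"
  unfolding cvec_inner_def Leb_C_def by measurable

lemma measurable_cvec_scale[measurable]: "cvec_scale D r \<in> Leb_C D \<rightarrow>\<^sub>M Leb_C D"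
  unfolding cvec_scale_def Leb_C_def by measurable

interpretation lborel_complex: product_sigma_finite "\<lambda>_::nat. (lborel::complex measure)"
  by standard

lemma nn_integral_Leb_C_prod:
  assumes "\<And>i. f i \<in> borel_measurable borel"
  shows "(\<integral>\<^sup>+x. (\<Prod>i<D. f i (x i)) \<partial>Leb_C D) = (\<Prod>i<D. \<integral>\<^sup>+z. f i z \<partial>lborel)"
  unfolding Leb_C_def using assms by (intro lborel_complex.product_nn_integral_prod) auto

definition gauss_C :: "nat \<Rightarrow> (nat \<Rightarrow> complex) measure" where
  "gauss_C D = density (Leb_C D) (\<lambda>x. ennreal (exp (- cvec_sqnorm D x)))"

lemma sets_gauss_C[simp, measurable_cong]: "sets (gauss_C D) = sets (Leb_C D)"
  by (simp add: gauss_C_def)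

lemma space_gauss_C[simp]: "space (gauss_C D) = space (Leb_C D)"
  by (simp add: gauss_C_def)

lemma nn_integral_gauss_C_exp:
  assumes [measurable]: "f \<in> borel_measurable (Leb_C D)"
  shows "(\<integral>\<^sup>+x. ennreal (exp (f x)) \<partial>gauss_C D)
    = (\<integral>\<^sup>+x. ennreal (exp (f x - cvec_sqnorm D x)) \<partial>Leb_C D)"
  unfolding gauss_C_def
  by (subst nn_integral_density)
     (auto intro!: nn_integral_cong
       simp: ennreal_mult[symmetric] exp_diff exp_minus divide_inverse mult.commute)

lemma emeasure_gauss_C_space: "emeasure (gauss_C D) (space (Leb_C D)) = ennreal (pi ^ D)"
proof -
  have "emeasure (gauss_C D) (space (Leb_C D)) = (\<integral>\<^sup>+x. ennreal (exp 0) \<partial>gauss_C D)"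
    by simp
  also have "\<dots> = (\<integral>\<^sup>+x. (\<Prod>i<D. ennreal (exp (- (cmod (x i))\<^sup>2))) \<partial>Leb_C D)"
    by (subst nn_integral_gauss_C_exp)
       (simp_all add: cvec_sqnorm_def exp_sum[symmetric] prod_ennreal sum_negf)
  also have "\<dots> = ennreal (pi ^ D)"
    by (subst nn_integral_Leb_C_prod)
       (measurable, simp add: nn_integral_exp_neg_cmod_power2 ennreal_power)
  finally show ?thesis .
qed

lemma nn_integral_gauss_C_exp_Re_inner:
  "(\<integral>\<^sup>+x. ennreal (exp (t * Re (cvec_inner D u x))) \<partial>gauss_C D)
     = ennreal (pi ^ D * exp (t\<^sup>2 * cvec_sqnorm D u / 4))"
proof -
  have "(\<integral>\<^sup>+x. ennreal (exp (t * Re (cvec_inner D u x))) \<partial>gauss_C D)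
      = (\<integral>\<^sup>+x. (\<Prod>i<D. ennreal (exp (Re ((t * cnj (u i)) * x i) - (cmod (x i))\<^sup>2))) \<partial>Leb_C D)"
    by (subst nn_integral_gauss_C_exp)
       (measurable, simp add: prod_ennreal exp_sum[symmetric] cvec_inner_def cvec_sqnorm_def
         sum_distrib_left sum_subtractf mult.assoc)
  also have "\<dots> = (\<Prod>i<D. ennreal (pi * exp ((cmod (t * cnj (u i)))\<^sup>2 / 4)))"
    by (subst nn_integral_Leb_C_prod)
       (measurable, simp only: nn_integral_exp_Re_mult_minus_cmod_power2)
  also have "\<dots> = ennreal (pi ^ D * exp (t\<^sup>2 * cvec_sqnorm D u / 4))"
    by (simp add: prod_ennreal prod.distrib exp_sum[symmetric] norm_mult power_mult_distrib
        cvec_sqnorm_def sum_distrib_left sum_divide_distrib)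
  finally show ?thesis .
qed

lemma nn_integral_gauss_C_exp_sqnorm:
  assumes "0 < 1 + t"
  shows "(\<integral>\<^sup>+x. ennreal (exp (- t * cvec_sqnorm D x)) \<partial>gauss_C D) = ennreal ((pi / (1 + t)) ^ D)"
proof -
  have "(\<integral>\<^sup>+x. ennreal (exp (- t * cvec_sqnorm D x)) \<partial>gauss_C D)
      = (\<integral>\<^sup>+x. ennreal (exp (- t * cvec_sqnorm D x - cvec_sqnorm D x)) \<partial>Leb_C D)"
    by (rule nn_integral_gauss_C_exp) measurable
  also have "\<dots> = (\<integral>\<^sup>+x. (\<Prod>i<D. ennreal (exp (- (1 + t) * (cmod (x i))\<^sup>2))) \<partial>Leb_C D)"
  proof (intro nn_integral_cong)
    fix x
    have "(\<Sum>i<D. - (1 + t) * (cmod (x i))\<^sup>2) = - (1 + t) * cvec_sqnorm D x"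
      unfolding cvec_sqnorm_def by (rule sum_distrib_left[symmetric])
    then have "(\<Prod>i<D. exp (- (1 + t) * (cmod (x i))\<^sup>2)) = exp (- t * cvec_sqnorm D x - cvec_sqnorm D x)"
      by (simp add: algebra_simps flip: exp_sum)
    then show "ennreal (exp (- t * cvec_sqnorm D x - cvec_sqnorm D x))
        = (\<Prod>i<D. ennreal (exp (- (1 + t) * (cmod (x i))\<^sup>2)))"
      by (simp add: prod_ennreal)
  qed
  also have "\<dots> = ennreal ((pi / (1 + t)) ^ D)"
    using assms
    by (subst nn_integral_Leb_C_prod)
       (measurable, simp only: nn_integral_exp_neg_scaled_cmod_power2, simp add: ennreal_power)
  finally show ?thesis .
qed

lemma emeasure_gauss_C_Re_inner_ge:
  assumes "0 \<le> s" and "0 < cvec_sqnorm D u"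
  shows "emeasure (gauss_C D) {x \<in> space (Leb_C D). s \<le> Re (cvec_inner D u x)}
    \<le> ennreal (exp (- s\<^sup>2 / cvec_sqnorm D u) * pi ^ D)"
proof (cases "s = 0")
  case True
  have "emeasure (gauss_C D) {x \<in> space (Leb_C D). s \<le> Re (cvec_inner D u x)}
      \<le> emeasure (gauss_C D) (space (Leb_C D))"
    by (intro emeasure_mono) auto
  then show ?thesis by (simp add: True emeasure_gauss_C_space)
next
  case False
  define \<sigma> where "\<sigma> = cvec_sqnorm D u"
  define t where "t = 2 * s / \<sigma>"
  have "0 < t" using assms False by (simp add: t_def \<sigma>_def)
  have "emeasure (gauss_C D) {x \<in> space (Leb_C D). s \<le> Re (cvec_inner D u x)}
      \<le> ennreal (exp (- t * s))
        * (\<integral>\<^sup>+x. ennreal (exp (t * Re (cvec_inner D u x))) * indicator (space (Leb_C D)) x \<partial>gauss_C D)"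
    using Chernoff_ineq_nn_integral_ge[OF \<open>0 < t\<close>, of "space (Leb_C D)" "gauss_C D" "\<lambda>x. Re (cvec_inner D u x)" s]
    by simp
  also have "(\<integral>\<^sup>+x. ennreal (exp (t * Re (cvec_inner D u x))) * indicator (space (Leb_C D)) x \<partial>gauss_C D)
      = (\<integral>\<^sup>+x. ennreal (exp (t * Re (cvec_inner D u x))) \<partial>gauss_C D)"
    by (intro nn_integral_cong) simp
  also have "\<dots> = ennreal (pi ^ D * exp (t\<^sup>2 * \<sigma> / 4))"
    unfolding \<sigma>_def by (rule nn_integral_gauss_C_exp_Re_inner)
  also have "ennreal (exp (- t * s)) * ennreal (pi ^ D * exp (t\<^sup>2 * \<sigma> / 4))
      = ennreal (exp (- s\<^sup>2 / \<sigma>) * pi ^ D)"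
  proof -
    have "- t * s + t\<^sup>2 * \<sigma> / 4 = - s\<^sup>2 / \<sigma>"
      using assms by (simp add: t_def \<sigma>_def power2_eq_square field_simps)
    then show ?thesis
      by (simp add: ennreal_mult[symmetric] mult.left_commute flip: exp_add)
  qed
  finally show ?thesis by (simp add: \<sigma>_def)
qed

lemma emeasure_gauss_C_sqnorm_le:
  assumes "0 < t"
  shows "emeasure (gauss_C D) {x \<in> space (Leb_C D). cvec_sqnorm D x \<le> r} \<le> ennreal (exp (t * r) * (pi / (1 + t)) ^ D)"
proof -
  have "emeasure (gauss_C D) {x \<in> space (Leb_C D). cvec_sqnorm D x \<le> r}
      \<le> ennreal (exp (t * r))
        * (\<integral>\<^sup>+x. ennreal (exp (- t * cvec_sqnorm D x)) * indicator (space (Leb_C D)) x \<partial>gauss_C D)"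
    using Chernoff_ineq_nn_integral_le[OF assms, of "space (Leb_C D)" "gauss_C D" "cvec_sqnorm D" r]
    by simp
  also have "(\<integral>\<^sup>+x. ennreal (exp (- t * cvec_sqnorm D x)) * indicator (space (Leb_C D)) x \<partial>gauss_C D)
      = (\<integral>\<^sup>+x. ennreal (exp (- t * cvec_sqnorm D x)) \<partial>gauss_C D)"
    by (intro nn_integral_cong) simp
  also have "\<dots> = ennreal ((pi / (1 + t)) ^ D)"
    using assms by (intro nn_integral_gauss_C_exp_sqnorm) simp
  finally show ?thesis
    using assms by (simp add: ennreal_mult)
qed

definition corr_cone :: "nat \<Rightarrow> real \<Rightarrow> (nat \<Rightarrow> complex) \<Rightarrow> (nat \<Rightarrow> complex) set" where
  "corr_cone D t u =
     {x \<in> space (Leb_C D). t * cvec_sqnorm D u * cvec_sqnorm D x < (cmod (cvec_inner D u x))\<^sup>2}"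

lemma sets_corr_cone[measurable]: "corr_cone D t u \<in> sets (Leb_C D)"
  unfolding corr_cone_def by measurable

lemma Re_quarter_turn_ge_if_cmod_power2_gt:
  assumes "0 \<le> s" and "2 * s\<^sup>2 < (cmod z)\<^sup>2"
  shows "\<exists>c\<in>{1, -1, \<i>, -\<i>}. s \<le> Re (c * z)"
proof (rule ccontr)
  assume "\<not> ?thesis"
  then have "\<bar>Re z\<bar> \<le> s" and "\<bar>Im z\<bar> \<le> s"
    by auto
  then have "(Re z)\<^sup>2 \<le> s\<^sup>2" and "(Im z)\<^sup>2 \<le> s\<^sup>2"
    using assms(1) by (simp_all add: power2_le_iff_abs_le)
  with assms(2) show False
    by (simp add: cmod_power2)
qed

lemma cvec_inner_mult_left: "cvec_inner D (\<lambda>i. cnj c * u i) x = c * cvec_inner D u x"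
  by (simp add: cvec_inner_def sum_distrib_left mult.assoc)

lemma cvec_sqnorm_mult_unit: "cmod c = 1 \<Longrightarrow> cvec_sqnorm D (\<lambda>i. c * u i) = cvec_sqnorm D u"
  by (simp add: cvec_sqnorm_def norm_mult)

lemma corr_cone_subset_small_or_half_planes:
  assumes "0 \<le> t"
  shows "corr_cone D t u \<subseteq> {x \<in> space (Leb_C D). cvec_sqnorm D x \<le> real D / 4} \<union>
    (\<Union>c\<in>{1, -1, \<i>, -\<i>}. {x \<in> space (Leb_C D).
       sqrt (t * real D * cvec_sqnorm D u / 8) \<le> Re (cvec_inner D (\<lambda>i. cnj c * u i) x)})"
proof
  fix x assume x: "x \<in> corr_cone D t u"
  define s where "s = sqrt (t * real D * cvec_sqnorm D u / 8)"
  have "0 \<le> s" and "2 * s\<^sup>2 = t * cvec_sqnorm D u * (real D / 4)"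
    using assms cvec_sqnorm_nonneg[of D u] by (simp_all add: s_def)
  show "x \<in> {x \<in> space (Leb_C D). cvec_sqnorm D x \<le> real D / 4} \<union>
    (\<Union>c\<in>{1, -1, \<i>, -\<i>}. {x \<in> space (Leb_C D). s \<le> Re (cvec_inner D (\<lambda>i. cnj c * u i) x)})"
  proof (cases "cvec_sqnorm D x \<le> real D / 4")
    case False
    have "2 * s\<^sup>2 \<le> t * cvec_sqnorm D u * cvec_sqnorm D x"
      unfolding \<open>2 * s\<^sup>2 = _\<close> using False assms cvec_sqnorm_nonneg[of D u]
      by (intro mult_left_mono) auto
    also have "\<dots> < (cmod (cvec_inner D u x))\<^sup>2"
      using x by (simp add: corr_cone_def)
    finally obtain c where "c \<in> {1, -1, \<i>, -\<i>}" and "s \<le> Re (c * cvec_inner D u x)"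
      using Re_quarter_turn_ge_if_cmod_power2_gt[OF \<open>0 \<le> s\<close>] by blast
    then show ?thesis
      using x by (auto simp: cvec_inner_mult_left corr_cone_def)
  qed (use x in \<open>auto simp: corr_cone_def\<close>)
qed

lemma emeasure_gauss_C_corr_cone:
  assumes "0 \<le> t"
  shows "emeasure (gauss_C D) (corr_cone D t u)
    \<le> ennreal ((exp (3 * real D / 4) / 4 ^ D + 4 * exp (- t * real D / 8)) * pi ^ D)"
proof (cases "cvec_sqnorm D u = 0")
  case True
  then show ?thesis
    by (simp add: corr_cone_def cvec_inner_eq_0_if_sqnorm_eq_0)
next
  case False
  define \<sigma> where "\<sigma> = cvec_sqnorm D u"
  have "0 < \<sigma>"
    using False cvec_sqnorm_nonneg[of D u] by (simp add: \<sigma>_def)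
  define s where "s = sqrt (t * real D * \<sigma> / 8)"
  define Q where "Q = {1, -1, \<i>, -\<i> :: complex}"
  define H where "H c = {x \<in> space (Leb_C D). s \<le> Re (cvec_inner D (\<lambda>i. cnj c * u i) x)}" for c
  define small where "small = {x \<in> space (Leb_C D). cvec_sqnorm D x \<le> real D / 4}"
  have H_le: "emeasure (gauss_C D) (H c) \<le> ennreal (exp (- t * real D / 8) * pi ^ D)" if "c \<in> Q" for c
  proof -
    have "cmod (cnj c) = 1"
      using that by (auto simp: Q_def)
    then have rotated: "cvec_sqnorm D (\<lambda>i. cnj c * u i) = \<sigma>"
      by (simp only: cvec_sqnorm_mult_unit \<sigma>_def)
    have "emeasure (gauss_C D) (H c) \<le> ennreal (exp (- s\<^sup>2 / cvec_sqnorm D (\<lambda>i. cnj c * u i)) * pi ^ D)"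
      unfolding H_def using assms \<open>0 < \<sigma>\<close> rotated by (intro emeasure_gauss_C_Re_inner_ge) (auto simp: s_def)
    also have "- s\<^sup>2 / cvec_sqnorm D (\<lambda>i. cnj c * u i) = - t * real D / 8"
      using assms \<open>0 < \<sigma>\<close> by (simp add: rotated s_def)
    finally show ?thesis .
  qed
  have "emeasure (gauss_C D) (corr_cone D t u) \<le> emeasure (gauss_C D) (small \<union> (\<Union>c\<in>Q. H c))"
    using corr_cone_subset_small_or_half_planes[OF assms, of D u]
    by (intro emeasure_mono) (auto simp: small_def H_def Q_def s_def \<sigma>_def)
  also have "\<dots> \<le> emeasure (gauss_C D) small + (\<Sum>c\<in>Q. emeasure (gauss_C D) (H c))"
    by (intro order.trans[OF emeasure_subadditive] add_left_mono emeasure_subadditive_finite)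
       (auto simp: small_def H_def Q_def)
  also have "\<dots> \<le> ennreal (exp (3 * (real D / 4)) * (pi / (1 + 3)) ^ D)
      + (\<Sum>c\<in>Q. ennreal (exp (- t * real D / 8) * pi ^ D))"
    unfolding small_def
    by (intro add_mono emeasure_gauss_C_sqnorm_le sum_mono H_le) auto
  also have "\<dots> = ennreal (exp (3 * (real D / 4)) * (pi / (1 + 3)) ^ D)
      + ennreal (4 * (exp (- t * real D / 8) * pi ^ D))"
    by (simp add: Q_def complex_eq_iff ennreal_mult)
  also have "\<dots> = ennreal ((exp (3 * real D / 4) / 4 ^ D + 4 * exp (- t * real D / 8)) * pi ^ D)"
    by (simp add: power_divide ennreal_plus[symmetric] algebra_simps del: ennreal_plus)
  finally show ?thesis .
qed

section \<open>Cones: Lebesgue, Gaussian and sphere measure\<close>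

definition cvec_cone :: "nat \<Rightarrow> (nat \<Rightarrow> complex) set \<Rightarrow> bool" where
  "cvec_cone D K \<longleftrightarrow> (\<forall>x\<in>space (Leb_C D). \<forall>r>0. cvec_scale D r x \<in> K \<longleftrightarrow> x \<in> K)"

definition sqnorm_sublevel :: "nat \<Rightarrow> real \<Rightarrow> (nat \<Rightarrow> complex) set" where
  "sqnorm_sublevel D s = {x \<in> space (Leb_C D). cvec_sqnorm D x \<le> s}"

lemma sets_sqnorm_sublevel[measurable]: "sqnorm_sublevel D s \<in> sets (Leb_C D)"
  unfolding sqnorm_sublevel_def by measurable

lemma cvec_cone_space: "cvec_cone D (space (Leb_C D))"
  by (simp add: cvec_cone_def cvec_scale_in_space)

lemma cvec_cone_corr_cone: "cvec_cone D (corr_cone D t u)"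
  unfolding cvec_cone_def
proof (intro ballI allI impI)
  fix x :: "nat \<Rightarrow> complex" and r :: real
  assume "x \<in> space (Leb_C D)" and "0 < r"
  have "t * cvec_sqnorm D u * cvec_sqnorm D (cvec_scale D r x) < (cmod (cvec_inner D u (cvec_scale D r x)))\<^sup>2
      \<longleftrightarrow> r\<^sup>2 * (t * cvec_sqnorm D u * cvec_sqnorm D x) < r\<^sup>2 * (cmod (cvec_inner D u x))\<^sup>2"
    by (simp add: cvec_sqnorm_scale cvec_inner_scale power_mult_distrib mult_ac)
  also have "\<dots> \<longleftrightarrow> t * cvec_sqnorm D u * cvec_sqnorm D x < (cmod (cvec_inner D u x))\<^sup>2"
    using \<open>0 < r\<close> by (simp add: mult_ac)
  finally show "cvec_scale D r x \<in> corr_cone D t u \<longleftrightarrow> x \<in> corr_cone D t u"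
    using \<open>x \<in> space (Leb_C D)\<close> by (simp add: corr_cone_def cvec_scale_in_space)
qed

lemma emeasure_lborel_complex_scale:
  assumes "0 < c" and "B \<in> sets (lborel::complex measure)"
  shows "emeasure lborel B = ennreal (c\<^sup>2) * emeasure lborel ((\<lambda>z. c *\<^sub>R z) -` B)"
proof -
  have "emeasure lborel B
      = emeasure (density (distr lborel borel (\<lambda>z::complex. 0 + c *\<^sub>R z))
          (\<lambda>_. ennreal (\<bar>c\<bar> ^ DIM(complex)))) B"
    using assms by (subst (1) lborel_affine[of c 0]) auto
  also have "\<dots> = ennreal (c\<^sup>2) * emeasure lborel ((\<lambda>z. c *\<^sub>R z) -` B)"
    using assms by (simp add: emeasure_density nn_integral_cmult_indicator emeasure_distr)
  finally show ?thesis .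
qed

lemma Leb_C_eq_density_scale:
  assumes "0 < c"
  shows "Leb_C D = density (distr (Leb_C D) (Leb_C D) (cvec_scale D c)) (\<lambda>_. ennreal (c ^ (2 * D)))"
  unfolding Leb_C_def
proof (rule lborel_complex.PiM_eqI[symmetric])
  fix A :: "nat \<Rightarrow> complex set"
  assume A: "\<And>i. i \<in> {..<D} \<Longrightarrow> A i \<in> sets lborel"
  have scaled_sets: "(\<lambda>z. c *\<^sub>R z) -` A i \<in> sets lborel" if "i < D" for i
    using measurable_sets[of "\<lambda>z::complex. c *\<^sub>R z" borel borel "A i"] A[of i] that by simp
  have "cvec_scale D c -` Pi\<^sub>E {..<D} A \<inter> space (Pi\<^sub>M {..<D} (\<lambda>_. lborel::complex measure))
      = Pi\<^sub>E {..<D} (\<lambda>i. (\<lambda>z. c *\<^sub>R z) -` A i)"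
    by (auto simp: space_PiM PiE_iff cvec_scale_def)
  moreover have "Pi\<^sub>E {..<D} A \<in> sets (Pi\<^sub>M {..<D} (\<lambda>_. lborel::complex measure))"
    using A by (intro sets_PiM_I_finite) auto
  ultimately have "emeasure (density (distr (Pi\<^sub>M {..<D} (\<lambda>_. lborel)) (Pi\<^sub>M {..<D} (\<lambda>_. lborel))
        (cvec_scale D c)) (\<lambda>_. ennreal (c ^ (2 * D)))) (Pi\<^sub>E {..<D} A)
      = ennreal (c ^ (2 * D))
        * emeasure (Pi\<^sub>M {..<D} (\<lambda>_. lborel)) (Pi\<^sub>E {..<D} (\<lambda>i. (\<lambda>z. c *\<^sub>R z) -` A i))"
    using measurable_cvec_scale[of D c]
    by (simp add: Leb_C_def emeasure_density nn_integral_cmult_indicator emeasure_distr)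
  also have "\<dots> = ennreal (c ^ (2 * D)) * (\<Prod>i<D. emeasure lborel ((\<lambda>z. c *\<^sub>R z) -` A i))"
    using scaled_sets by (subst lborel_complex.emeasure_PiM) auto
  also have "\<dots> = (\<Prod>i<D. ennreal (c\<^sup>2) * emeasure lborel ((\<lambda>z. c *\<^sub>R z) -` A i))"
    using assms by (simp add: prod.distrib power_mult ennreal_power)
  also have "\<dots> = (\<Prod>i<D. emeasure lborel (A i))"
    using A assms by (intro prod.cong refl emeasure_lborel_complex_scale[symmetric]) auto
  finally show "emeasure (density (distr (Pi\<^sub>M {..<D} (\<lambda>_. lborel)) (Pi\<^sub>M {..<D} (\<lambda>_. lborel))
        (cvec_scale D c)) (\<lambda>_. ennreal (c ^ (2 * D)))) (Pi\<^sub>E {..<D} A)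
      = (\<Prod>i\<in>{..<D}. emeasure lborel (A i))" .
qed simp_all

lemma emeasure_Leb_C_scale:
  assumes "0 < c" and "A \<in> sets (Leb_C D)"
  shows "emeasure (Leb_C D) A = ennreal (c ^ (2 * D)) * emeasure (Leb_C D) (cvec_scale D c -` A \<inter> space (Leb_C D))"
  using assms
  by (subst (1) Leb_C_eq_density_scale[OF assms(1)])
     (simp add: emeasure_density nn_integral_cmult_indicator emeasure_distr)

lemma emeasure_cone_inter_sqnorm_sublevel:
  assumes "K \<in> sets (Leb_C D)" and "cvec_cone D K" and "0 < s"
  shows "emeasure (Leb_C D) (K \<inter> sqnorm_sublevel D s) = ennreal (s ^ D) * emeasure (Leb_C D) (K \<inter> sqnorm_sublevel D 1)"
proof -
  have "cvec_scale D (sqrt s) -` (K \<inter> sqnorm_sublevel D s) \<inter> space (Leb_C D) = K \<inter> sqnorm_sublevel D 1"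
    using assms(2,3) by (auto simp: cvec_cone_def sqnorm_sublevel_def cvec_sqnorm_scale cvec_scale_in_space)
  then show ?thesis
    using emeasure_Leb_C_scale[of "sqrt s" "K \<inter> sqnorm_sublevel D s" D] assms
    by (simp add: power_mult)
qed

lemma nn_integral_exp_neg_atLeast:
  "(\<integral>\<^sup>+s. ennreal (exp (- s)) * indicator {a..} s \<partial>lborel) = ennreal (exp (- a))"
proof -
  have "((\<lambda>x::real. - exp (- x)) \<longlongrightarrow> 0) at_top"
    using tendsto_minus[OF filterlim_compose[OF exp_at_bot filterlim_uminus_at_bot_at_top]] by simp
  then have "(\<integral>\<^sup>+s. ennreal (exp (- s)) * indicator {a..} s \<partial>lborel) = ennreal (0 - (- exp (- a)))"
    by (intro nn_integral_FTC_atLeast) (auto intro!: derivative_eq_intros)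
  then show ?thesis by simp
qed

lemma emeasure_gauss_C_eq_layers:
  assumes [measurable]: "K \<in> sets (Leb_C D)"
  shows "emeasure (gauss_C D) K
    = (\<integral>\<^sup>+s. ennreal (exp (- s)) * emeasure (Leb_C D) (K \<inter> sqnorm_sublevel D s) \<partial>lborel)"
proof -
  interpret Leb: sigma_finite_measure "Leb_C D"
    unfolding Leb_C_def by (rule lborel_complex.sigma_finite) simp
  interpret pair_sigma_finite "Leb_C D" lborel ..
  define f where "f x s = (if x \<in> K \<and> cvec_sqnorm D x \<le> s then ennreal (exp (- s)) else 0)" for x s
  have [measurable]: "case_prod f \<in> borel_measurable (Leb_C D \<Otimes>\<^sub>M lborel)"
    unfolding f_def by measurable
  have "emeasure (gauss_C D) K = (\<integral>\<^sup>+x. ennreal (exp (- cvec_sqnorm D x)) * indicator K x \<partial>Leb_C D)"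
    unfolding gauss_C_def by (rule emeasure_density) auto
  also have "\<dots> = (\<integral>\<^sup>+x. \<integral>\<^sup>+s. f x s \<partial>lborel \<partial>Leb_C D)"
  proof (intro nn_integral_cong)
    fix x
    have "(\<integral>\<^sup>+s. f x s \<partial>lborel)
        = indicator K x * (\<integral>\<^sup>+s. ennreal (exp (- s)) * indicator {cvec_sqnorm D x..} s \<partial>lborel)"
      by (cases "x \<in> K") (auto simp: f_def intro!: nn_integral_cong split: split_indicator)
    then show "ennreal (exp (- cvec_sqnorm D x)) * indicator K x = (\<integral>\<^sup>+s. f x s \<partial>lborel)"
      by (simp add: nn_integral_exp_neg_atLeast mult.commute)
  qed
  also have "\<dots> = (\<integral>\<^sup>+s. \<integral>\<^sup>+x. f x s \<partial>Leb_C D \<partial>lborel)"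
    using Fubini'[of f] by simp
  also have "\<dots> = (\<integral>\<^sup>+s. ennreal (exp (- s)) * emeasure (Leb_C D) (K \<inter> sqnorm_sublevel D s) \<partial>lborel)"
  proof (intro nn_integral_cong)
    fix s
    have "(\<integral>\<^sup>+x. f x s \<partial>Leb_C D)
        = (\<integral>\<^sup>+x. ennreal (exp (- s)) * indicator (K \<inter> sqnorm_sublevel D s) x \<partial>Leb_C D)"
      using sets.sets_into_space[OF assms]
      by (intro nn_integral_cong) (auto simp: f_def sqnorm_sublevel_def split: split_indicator)
    then show "(\<integral>\<^sup>+x. f x s \<partial>Leb_C D) = ennreal (exp (- s)) * emeasure (Leb_C D) (K \<inter> sqnorm_sublevel D s)"
      by (simp add: nn_integral_cmult_indicator)
  qed
  finally show ?thesis .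
qed

(* This is Gamma(D + 1); only its finiteness and positivity are used. *)
definition radial_const :: "nat \<Rightarrow> ennreal" where
  "radial_const D = (\<integral>\<^sup>+s. ennreal (exp (- s) * s ^ D) * indicator {0<..} s \<partial>lborel)"

lemma emeasure_gauss_C_cone:
  assumes [measurable]: "K \<in> sets (Leb_C D)" and "cvec_cone D K"
  shows "emeasure (gauss_C D) K = emeasure (Leb_C D) (K \<inter> sqnorm_sublevel D 1) * radial_const D"
proof -
  have "emeasure (gauss_C D) K
      = (\<integral>\<^sup>+s. ennreal (exp (- s) * s ^ D) * indicator {0<..} s
            * emeasure (Leb_C D) (K \<inter> sqnorm_sublevel D 1) \<partial>lborel)"
    unfolding emeasure_gauss_C_eq_layers[OF assms(1)]
  proof (rule nn_integral_cong_AE)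
    show "AE s in lborel. ennreal (exp (- s)) * emeasure (Leb_C D) (K \<inter> sqnorm_sublevel D s)
        = ennreal (exp (- s) * s ^ D) * indicator {0<..} s * emeasure (Leb_C D) (K \<inter> sqnorm_sublevel D 1)"
      using AE_lborel_singleton[of 0]
    proof eventually_elim
      case (elim s)
      show ?case
      proof (cases "0 < s")
        case True
        then show ?thesis
          using emeasure_cone_inter_sqnorm_sublevel[OF assms True] by (simp add: ennreal_mult mult.assoc)
      next
        case False
        then have "s < cvec_sqnorm D x" for x
          using elim cvec_sqnorm_nonneg[of D x] by simp
        then have "sqnorm_sublevel D s = {}"
          by (auto simp: sqnorm_sublevel_def not_le[symmetric])
        then show ?thesis
          using False by simp
      qed
    qed
  qed
  also have "\<dots> = emeasure (Leb_C D) (K \<inter> sqnorm_sublevel D 1) * radial_const D"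
    unfolding radial_const_def by (subst mult.commute, rule nn_integral_multc) measurable
  finally show ?thesis .
qed

lemma emeasure_unit_ball_mult_radial_const:
  "emeasure (Leb_C D) (sqnorm_sublevel D 1) * radial_const D = ennreal (pi ^ D)"
  using emeasure_gauss_C_cone[OF sets.top cvec_cone_space, of D]
  by (simp add: emeasure_gauss_C_space Int_absorb1 sqnorm_sublevel_def)

lemma emeasure_unit_ball_ne_0: "emeasure (Leb_C D) (sqnorm_sublevel D 1) \<noteq> 0"
  using emeasure_unit_ball_mult_radial_const[of D] by auto

lemma emeasure_unit_ball_ne_top: "emeasure (Leb_C D) (sqnorm_sublevel D 1) \<noteq> \<top>"
  using emeasure_unit_ball_mult_radial_const[of D] by (auto simp: ennreal_top_mult split: if_splits)

definition radial_proj :: "nat \<Rightarrow> (nat \<Rightarrow> complex) \<Rightarrow> nat \<Rightarrow> complex" where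
  "radial_proj D x = (\<lambda>i\<in>{..<D}. complex_of_real (sqrt (real D) / cvec_norm D x) * x i)"

lemma unif_sphere_C_eq_distr:
  "unif_sphere_C D = distr (uniform_measure (Leb_C D) (sqnorm_sublevel D 1)) (Leb_C D) (radial_proj D)"
proof -
  have "{x \<in> space (Leb_C D). cvec_norm D x \<le> 1} = sqnorm_sublevel D 1"
    by (auto simp: sqnorm_sublevel_def cvec_norm_eq_sqrt_sqnorm)
  then show ?thesis
    unfolding unif_sphere_C_def radial_proj_def by simp
qed

lemma measurable_radial_proj[measurable]: "radial_proj D \<in> Leb_C D \<rightarrow>\<^sub>M Leb_C D"
proof -
  have [measurable]: "cvec_norm D \<in> borel_measurable (Pi\<^sub>M {..<D} (\<lambda>_. lborel))"
    using borel_measurable_cvec_sqnorm[of D]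
    unfolding cvec_norm_eq_sqrt_sqnorm[abs_def] Leb_C_def by measurable
  show ?thesis
    unfolding radial_proj_def Leb_C_def by measurable
qed

lemma sets_unif_sphere_C[simp, measurable_cong]: "sets (unif_sphere_C D) = sets (Leb_C D)"
  by (simp add: unif_sphere_C_eq_distr)

lemma space_unif_sphere_C[simp]: "space (unif_sphere_C D) = space (Leb_C D)"
  by (simp add: unif_sphere_C_eq_distr)

lemma prob_space_unif_sphere_C: "prob_space (unif_sphere_C D)"
  unfolding unif_sphere_C_eq_distr
  by (intro prob_space.prob_space_distr prob_space_uniform_measure)
     (simp_all add: emeasure_unit_ball_ne_0 emeasure_unit_ball_ne_top)

lemma cvec_sqnorm_radial_proj_le: "cvec_sqnorm D (radial_proj D x) \<le> real D"
proof -
  have "cvec_sqnorm D (radial_proj D x) = (sqrt (real D) / cvec_norm D x)\<^sup>2 * cvec_sqnorm D x"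
    unfolding cvec_sqnorm_def sum_distrib_left
    by (rule sum.cong) (auto simp: radial_proj_def norm_mult norm_divide power_divide power_mult_distrib)
  also have "\<dots> \<le> real D"
    using cvec_sqnorm_nonneg[of D x]
    by (cases "cvec_sqnorm D x = 0") (simp_all add: cvec_norm_eq_sqrt_sqnorm power_divide)
  finally show ?thesis .
qed

lemma radial_proj_in_cone_iff:
  assumes "cvec_cone D K" and "x \<in> space (Leb_C D)"
  shows "radial_proj D x \<in> K \<longleftrightarrow> x \<in> K"
proof (cases "cvec_sqnorm D x = 0")
  case True
  then have "x i = 0" if "i < D" for i
    using that by (simp add: cvec_sqnorm_def sum_nonneg_eq_0_iff)
  \<comment> \<open>at the origin the factor \<open>sqrt D / 0 = 0\<close> is harmless: \<open>radial_proj D\<close> fixes \<open>x\<close>\<close>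
  then have "radial_proj D x = x"
    using assms(2) by (auto simp: radial_proj_def Leb_C_def space_PiM PiE_iff extensional_def)
  then show ?thesis by simp
next
  case False
  then have "0 < D"
    by (cases D) (simp_all add: cvec_sqnorm_def)
  moreover have "0 < cvec_norm D x"
    using False cvec_sqnorm_nonneg[of D x] by (simp add: cvec_norm_eq_sqrt_sqnorm)
  moreover have "radial_proj D x = cvec_scale D (sqrt (real D) / cvec_norm D x) x"
    by (simp add: radial_proj_def cvec_scale_def scaleR_conv_of_real)
  ultimately show ?thesis
    using assms by (simp add: cvec_cone_def)
qed

lemma emeasure_unif_sphere_C_cone:
  assumes "K \<in> sets (Leb_C D)" and "cvec_cone D K"
  shows "emeasure (unif_sphere_C D) K * ennreal (pi ^ D) = emeasure (gauss_C D) K"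
proof -
  let ?B = "sqnorm_sublevel D 1"
  have "radial_proj D -` K \<inter> space (Leb_C D) = K"
    using radial_proj_in_cone_iff[OF assms(2)] sets.sets_into_space[OF assms(1)] by auto
  then have "emeasure (unif_sphere_C D) K = emeasure (Leb_C D) (?B \<inter> K) / emeasure (Leb_C D) ?B"
    using assms(1) by (simp add: unif_sphere_C_eq_distr emeasure_distr)
  then have "emeasure (unif_sphere_C D) K * ennreal (pi ^ D)
      = emeasure (Leb_C D) (K \<inter> ?B) * (radial_const D * emeasure (Leb_C D) ?B / emeasure (Leb_C D) ?B)"
    by (simp add: emeasure_unit_ball_mult_radial_const[symmetric] ennreal_times_divide Int_commute mult_ac)
  also have "\<dots> = emeasure (gauss_C D) K"
    by (simp only: mult_divide_eq_ennreal[OF emeasure_unit_ball_ne_0 emeasure_unit_ball_ne_top]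
        emeasure_gauss_C_cone[OF assms])
  finally show ?thesis .
qed

lemma AE_unif_sphere_C_sqnorm_le: "AE v in unif_sphere_C D. cvec_sqnorm D v \<le> real D"
proof -
  have "radial_proj D \<in> uniform_measure (Leb_C D) (sqnorm_sublevel D 1) \<rightarrow>\<^sub>M Leb_C D"
    by (simp cong: measurable_cong_sets)
  then show ?thesis
    unfolding unif_sphere_C_eq_distr by (subst AE_distr_iff) (auto simp: cvec_sqnorm_radial_proj_le)
qed

lemma emeasure_unif_sphere_C_inner_gt:
  assumes "0 \<le> t" and "cvec_sqnorm D u \<le> real D"
  shows "emeasure (unif_sphere_C D) {v \<in> space (Leb_C D). t * (real D)\<^sup>2 < (cmod (cvec_inner D u v))\<^sup>2}
    \<le> ennreal (exp (3 * real D / 4) / 4 ^ D + 4 * exp (- t * real D / 8))"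
proof -
  have bound: "t * cvec_sqnorm D u * cvec_sqnorm D v \<le> t * (real D)\<^sup>2" if "cvec_sqnorm D v \<le> real D" for v
    using assms that by (simp add: power2_eq_square mult.assoc mult_left_mono mult_mono cvec_sqnorm_nonneg)
  have "AE v in unif_sphere_C D. v \<in> {v \<in> space (Leb_C D). t * (real D)\<^sup>2 < (cmod (cvec_inner D u v))\<^sup>2}
      \<longrightarrow> v \<in> corr_cone D t u"
    using AE_unif_sphere_C_sqnorm_le
  proof eventually_elim
    case (elim v)
    then show ?case
      using bound[OF elim] by (auto simp: corr_cone_def)
  qed
  then have "emeasure (unif_sphere_C D) {v \<in> space (Leb_C D). t * (real D)\<^sup>2 < (cmod (cvec_inner D u v))\<^sup>2}
      \<le> emeasure (unif_sphere_C D) (corr_cone D t u)"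
    by (rule emeasure_mono_AE) simp
  moreover have "emeasure (unif_sphere_C D) (corr_cone D t u) * ennreal (pi ^ D)
      \<le> ennreal (exp (3 * real D / 4) / 4 ^ D + 4 * exp (- t * real D / 8)) * ennreal (pi ^ D)"
    using emeasure_gauss_C_corr_cone[OF assms(1), of D u]
    by (simp add: emeasure_unif_sphere_C_cone cvec_cone_corr_cone ennreal_mult)
  ultimately show ?thesis
    by (simp add: ennreal_mult_le_mult_iff mult.commute[of _ "ennreal (pi ^ D)"])
qed

section \<open>Union bound over independent pairs\<close>

lemma (in prob_space) emeasure_PiM_pair_le:
  assumes I: "finite I" "k \<in> I" "l \<in> I" "k \<noteq> l"
    and P[measurable]: "Measurable.pred (M \<Otimes>\<^sub>M M) (\<lambda>(u, v). P u v)"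
    and bound: "AE u in M. emeasure M {v \<in> space M. P u v} \<le> ennreal \<beta>"
  shows "emeasure (PiM I (\<lambda>_. M)) {a \<in> space (PiM I (\<lambda>_. M)). P (a k) (a l)} \<le> ennreal \<beta>"
proof -
  interpret product_sigma_finite "\<lambda>_. M"
    by (simp add: product_sigma_finite_def sigma_finite_measure_axioms)
  define J where "J = I - {l}"
  have I_eq: "I = insert l J" and "finite J" "l \<notin> J" "k \<in> J"
    using I by (auto simp: J_def)
  interpret PJ: prob_space "PiM J (\<lambda>_. M)"
    by (intro prob_space_PiM prob_space_axioms)
  let ?E = "{a \<in> space (PiM I (\<lambda>_. M)). P (a k) (a l)}"
  have "(\<lambda>a. (a k, a l)) \<in> PiM I (\<lambda>_. M) \<rightarrow>\<^sub>M M \<Otimes>\<^sub>M M"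
    using I by (intro measurable_Pair measurable_component_singleton) auto
  from measurable_compose[OF this P] have E_sets: "?E \<in> sets (PiM I (\<lambda>_. M))"
    by (simp add: pred_def)
  have section_sets: "{v \<in> space M. P u v} \<in> sets M" if "u \<in> space M" for u
    using measurable_compose[OF measurable_Pair1'[OF that] P] by (simp add: pred_def)
  have "emeasure (PiM I (\<lambda>_. M)) ?E = (\<integral>\<^sup>+a. indicator ?E a \<partial>PiM (insert l J) (\<lambda>_. M))"
    using E_sets by (simp add: I_eq)
  also have "\<dots> = (\<integral>\<^sup>+x. \<integral>\<^sup>+y. indicator ?E (x(l := y)) \<partial>M \<partial>PiM J (\<lambda>_. M))"
    using E_sets \<open>finite J\<close> \<open>l \<notin> J\<close> by (intro product_nn_integral_insert) (simp_all add: I_eq)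
  also have "\<dots> \<le> (\<integral>\<^sup>+x. ennreal \<beta> \<partial>PiM J (\<lambda>_. M))"
  proof (rule nn_integral_mono_AE)
    show "AE x in PiM J (\<lambda>_. M). (\<integral>\<^sup>+y. indicator ?E (x(l := y)) \<partial>M) \<le> ennreal \<beta>"
      using AE_PiM_component[OF prob_space_axioms \<open>k \<in> J\<close> bound] AE_space
    proof eventually_elim
      case (elim x)
      have "x k \<in> space M"
        using elim(2) \<open>k \<in> J\<close> by (auto simp: space_PiM)
      have indicator_update: "indicator ?E (x(l := y)) = indicator {v \<in> space M. P (x k) v} y" if "y \<in> space M" for y
      proof -
        have "x(l := y) \<in> space (PiM I (\<lambda>_. M))"
          using elim(2) that by (auto simp: I_eq space_PiM PiE_iff extensional_def)
        then show ?thesis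
          using that I(4) by (simp split: split_indicator)
      qed
      have "(\<integral>\<^sup>+y. indicator ?E (x(l := y)) \<partial>M) = (\<integral>\<^sup>+y. indicator {v \<in> space M. P (x k) v} y \<partial>M)"
        by (intro nn_integral_cong indicator_update)
      also have "\<dots> = emeasure M {v \<in> space M. P (x k) v}"
        using section_sets[OF \<open>x k \<in> space M\<close>] by (rule nn_integral_indicator)
      finally show ?case
        using elim(1) by simp
    qed
  qed
  also have "\<dots> = ennreal \<beta>"
    by (simp add: PJ.emeasure_space_1)
  finally show ?thesis .
qed

lemma measurable_pair_cvec_inner[measurable]:
  "(\<lambda>(u, v). cvec_inner D u v) \<in> borel_measurable (Leb_C D \<Otimes>\<^sub>M Leb_C D)"
proof -
  have [measurable]: "(\<lambda>x. x i) \<in> borel_measurable (Leb_C D)" if "i \<in> {..<D}" for i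
    using that unfolding Leb_C_def by measurable
  have [measurable]: "(cnj :: complex \<Rightarrow> complex) \<in> borel_measurable borel"
    by (intro borel_measurable_continuous_onI continuous_intros)
  show ?thesis
    unfolding cvec_inner_def case_prod_beta by measurable
qed

lemma measure_iid_sphere_inner_gt:
  assumes "k < N" "l < N" "k \<noteq> l" and "0 \<le> t"
  shows "measure (iid_sphere N D)
      {a \<in> space (iid_sphere N D). t * (real D)\<^sup>2 < (cmod (cvec_inner D (a k) (a l)))\<^sup>2}
    \<le> exp (3 * real D / 4) / 4 ^ D + 4 * exp (- t * real D / 8)"
proof -
  interpret prob_space "unif_sphere_C D"
    by (rule prob_space_unif_sphere_C)
  have "emeasure (iid_sphere N D)
      {a \<in> space (iid_sphere N D). t * (real D)\<^sup>2 < (cmod (cvec_inner D (a k) (a l)))\<^sup>2}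
    \<le> ennreal (exp (3 * real D / 4) / 4 ^ D + 4 * exp (- t * real D / 8))"
    unfolding iid_sphere_def
  proof (rule emeasure_PiM_pair_le)
    show "AE u in unif_sphere_C D. emeasure (unif_sphere_C D)
        {v \<in> space (unif_sphere_C D). t * (real D)\<^sup>2 < (cmod (cvec_inner D u v))\<^sup>2}
      \<le> ennreal (exp (3 * real D / 4) / 4 ^ D + 4 * exp (- t * real D / 8))"
      using AE_unif_sphere_C_sqnorm_le
      by eventually_elim (simp only: space_unif_sphere_C emeasure_unif_sphere_C_inner_gt \<open>0 \<le> t\<close>)
  qed (use assms in auto)
  then show ?thesis
    by (simp add: measure_def enn2real_leI)
qed

lemma borel_measurable_iid_sphere_inner[measurable]:
  assumes "k < N" "l < N"
  shows "(\<lambda>a. cvec_inner D (a k) (a l)) \<in> borel_measurable (iid_sphere N D)"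
proof -
  have "(\<lambda>a. (a k, a l)) \<in> iid_sphere N D \<rightarrow>\<^sub>M unif_sphere_C D \<Otimes>\<^sub>M unif_sphere_C D"
    unfolding iid_sphere_def using assms by (intro measurable_Pair measurable_component_singleton) auto
  then have "(\<lambda>a. (a k, a l)) \<in> iid_sphere N D \<rightarrow>\<^sub>M Leb_C D \<Otimes>\<^sub>M Leb_C D"
    by (simp cong: measurable_cong_sets)
  from measurable_compose[OF this measurable_pair_cvec_inner] show ?thesis
    by simp
qed

lemma measure_iid_sphere_pairwise_inner_le:
  assumes "0 \<le> t"
  shows "1 - (real N)\<^sup>2 * (exp (3 * real D / 4) / 4 ^ D + 4 * exp (- t * real D / 8))
    \<le> measure (iid_sphere N D) {a \<in> space (iid_sphere N D).
         \<forall>k<N. \<forall>l<N. k \<noteq> l \<longrightarrow> (cmod (cvec_inner D (a k) (a l)))\<^sup>2 \<le> t * (real D)\<^sup>2}"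
proof -
  interpret prob_space "iid_sphere N D"
    unfolding iid_sphere_def by (intro prob_space_PiM prob_space_unif_sphere_C)
  define \<beta> where "\<beta> = exp (3 * real D / 4) / 4 ^ D + 4 * exp (- t * real D / 8)"
  define pairs where "pairs = {(k, l). k < N \<and> l < N \<and> k \<noteq> l}"
  define bad where "bad = (\<lambda>(k, l). {a \<in> space (iid_sphere N D).
    \<not> (cmod (cvec_inner D (a k) (a l)))\<^sup>2 \<le> t * (real D)\<^sup>2})"
  have "pairs \<subseteq> {..<N} \<times> {..<N}"
    by (auto simp: pairs_def)
  then have "finite pairs" and "card pairs \<le> N * N"
    using card_mono[of "{..<N} \<times> {..<N}" pairs] by (auto intro: finite_subset simp: card_cartesian_product)
  have bad_sets: "bad p \<in> sets (iid_sphere N D)" if "p \<in> pairs" for p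
    using that by (auto simp: pairs_def bad_def)
  have "{a \<in> space (iid_sphere N D).
      \<forall>k<N. \<forall>l<N. k \<noteq> l \<longrightarrow> (cmod (cvec_inner D (a k) (a l)))\<^sup>2 \<le> t * (real D)\<^sup>2}
    = space (iid_sphere N D) - (\<Union>p\<in>pairs. bad p)"
    by (auto simp: pairs_def bad_def)
  moreover have "prob (\<Union>p\<in>pairs. bad p) \<le> (\<Sum>p\<in>pairs. prob (bad p))"
    using \<open>finite pairs\<close> bad_sets by (rule measure_UNION_le)
  moreover have "prob (bad p) \<le> \<beta>" if "p \<in> pairs" for p
    using that assms measure_iid_sphere_inner_gt by (auto simp: pairs_def bad_def \<beta>_def not_le)
  then have "(\<Sum>p\<in>pairs. prob (bad p)) \<le> real (card pairs) * \<beta>"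
    using sum_mono[of pairs "\<lambda>p. prob (bad p)" "\<lambda>_. \<beta>"] by simp
  moreover have "real (card pairs) * \<beta> \<le> (real N)\<^sup>2 * \<beta>"
    using \<open>card pairs \<le> N * N\<close> by (intro mult_right_mono) (simp_all add: \<beta>_def power2_eq_square flip: of_nat_mult)
  moreover have "(\<Union>p\<in>pairs. bad p) \<in> events"
    using \<open>finite pairs\<close> bad_sets by blast
  ultimately show ?thesis
    unfolding \<beta>_def[symmetric] by (simp add: prob_compl)
qed

lemma mult_sqrt_le_power2:
  fixes x :: real
  assumes "1 \<le> x"
  shows "x * sqrt x \<le> x\<^sup>2"
proof -
  have "sqrt x \<le> x"
    using assms real_sqrt_le_mono[of x "x\<^sup>2"] by (simp add: power2_eq_square)
  then show ?thesis
    using assms by (simp add: power2_eq_square)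
qed

lemma union_bound_small_norm_term_le:
  assumes "1 \<le> D" "1 \<le> N" and "8 * ln (real D * real N) < real D"
  shows "(real N)\<^sup>2 * (exp (3 * real D / 4) / 4 ^ D) \<le> 1 / (real D * sqrt (real D))"
proof -
  have "real D * real N < exp (real D / 8)"
    using ln_less_cancel_iff[of "real D * real N" "exp (real D / 8)"] assms by simp
  then have "(real D * real N)\<^sup>2 < exp (real D / 8) ^ 2"
    using assms by (intro power_strict_mono) auto
  also have "\<dots> = exp (real D / 4)"
    by (simp add: power2_eq_square flip: exp_add)
  finally have DN: "(real D * real N)\<^sup>2 < exp (real D / 4)" .
  have "exp (real D) = exp 1 ^ D"
    by (simp flip: exp_of_nat_mult)
  also have "\<dots> \<le> 4 ^ D"
    using exp_le by (intro power_mono) auto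
  finally have exp_le_4_pow: "exp (real D) \<le> 4 ^ D" .
  have "(real D * real N)\<^sup>2 * (exp (3 * real D / 4) / 4 ^ D) \<le> exp (real D / 4) * (exp (3 * real D / 4) / 4 ^ D)"
    using DN by (intro mult_right_mono) auto
  also have "\<dots> = exp (real D) / 4 ^ D"
    by (simp flip: exp_add)
  also have "\<dots> \<le> 1"
    using exp_le_4_pow by simp
  finally have "(real N)\<^sup>2 * (exp (3 * real D / 4) / 4 ^ D) \<le> 1 / (real D)\<^sup>2"
    using assms by (simp add: power_mult_distrib field_simps)
  also have "\<dots> \<le> 1 / (real D * sqrt (real D))"
    using assms mult_sqrt_le_power2[of "real D"] by (intro divide_left_mono) auto
  finally show ?thesis .
qed

lemma union_bound_half_plane_term_le:
  assumes "1 \<le> D" "1 \<le> N"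
  shows "(real N)\<^sup>2 * (4 * exp (- 4 * ln (real D * real N))) \<le> 4 / (real D * sqrt (real D))"
proof -
  have "exp (- 4 * ln (real D * real N)) = 1 / (real D * real N) ^ 4"
    using assms by (simp add: exp_minus exp_of_nat_mult[of 4, simplified] divide_inverse)
  then have "(real N)\<^sup>2 * (4 * exp (- 4 * ln (real D * real N))) = 4 / ((real D)\<^sup>2 * ((real D)\<^sup>2 * (real N)\<^sup>2))"
    using assms by (simp add: power_mult_distrib field_simps eval_nat_numeral)
  also have "\<dots> \<le> 4 / (real D * sqrt (real D))"
  proof (rule divide_left_mono)
    have "real D * sqrt (real D) \<le> (real D)\<^sup>2"
      using assms by (intro mult_sqrt_le_power2) simp
    also have "\<dots> \<le> (real D)\<^sup>2 * ((real D)\<^sup>2 * (real N)\<^sup>2)"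
    proof -
      have "1 \<le> (real D)\<^sup>2 * (real N)\<^sup>2"
        using assms by (intro mult_ge1_I one_le_power) auto
      from mult_left_mono[OF this, of "(real D)\<^sup>2"] show ?thesis
        by simp
    qed
    finally show "real D * sqrt (real D) \<le> (real D)\<^sup>2 * ((real D)\<^sup>2 * (real N)\<^sup>2)" .
  qed (use assms in auto)
  finally show ?thesis .
qed

lemma cmod_scaled_le_sqrt_iff:
  assumes "0 < d"
  shows "cmod (1 / complex_of_real d * s) \<le> sqrt c \<longleftrightarrow> (cmod s)\<^sup>2 \<le> c * d\<^sup>2"
proof -
  have "cmod (1 / complex_of_real d * s) = cmod s / d"
    using assms by (simp add: norm_mult norm_divide)
  moreover have "cmod s / d \<le> sqrt c \<longleftrightarrow> (cmod s / d)\<^sup>2 \<le> c"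
    using real_le_rsqrt sqrt_ge_absD[of "cmod s / d" c] assms by auto
  moreover have "(cmod s / d)\<^sup>2 \<le> c \<longleftrightarrow> (cmod s)\<^sup>2 \<le> c * d\<^sup>2"
    using assms by (simp add: power_divide pos_divide_le_eq)
  ultimately show ?thesis
    by simp
qed

lemma pairwise_inner_event_eq:
  assumes "0 < D" and "S \<subseteq> {..<N}" and "\<forall>l<N. 0 \<le> \<gamma> l"
  shows "{a \<in> A.
      (\<forall>k<N. \<forall>l<N. k \<noteq> l \<longrightarrow>
         cmod (1 / complex_of_real (real D) * cvec_inner D (a k) (a l)) \<le> sqrt (32 * L / real D))
    \<and> (\<forall>k<N. k \<notin> S \<longrightarrow>
         (\<Sum>l\<in>S. \<gamma> l * (cmod (cvec_inner D (a k) (a l)))\<^sup>2) \<le> (\<Sum>l\<in>S. 32 * \<gamma> l * real D * L))}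
    = {a \<in> A. \<forall>k<N. \<forall>l<N. k \<noteq> l \<longrightarrow> (cmod (cvec_inner D (a k) (a l)))\<^sup>2 \<le> 32 * L / real D * (real D)\<^sup>2}"
    (is "{a \<in> A. ?pairwise a \<and> ?weighted a} = {a \<in> A. ?good a}")
proof -
  have "?pairwise a \<longleftrightarrow> ?good a" for a
    by (simp only: cmod_scaled_le_sqrt_iff of_nat_0_less_iff assms(1))
  moreover have "?weighted a" if "?good a" for a
  proof (intro allI impI sum_mono)
    fix k l assume "k < N" "k \<notin> S" "l \<in> S"
    then have "l < N" and "k \<noteq> l" and "0 \<le> \<gamma> l"
      using assms by auto
    then have "(cmod (cvec_inner D (a k) (a l)))\<^sup>2 \<le> 32 * L / real D * (real D)\<^sup>2"
      using that \<open>k < N\<close> by blast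
    also have "\<dots> = 32 * L * real D"
      using assms(1) by (simp add: power2_eq_square)
    finally have "(cmod (cvec_inner D (a k) (a l)))\<^sup>2 \<le> 32 * L * real D" .
    from mult_left_mono[OF this \<open>0 \<le> \<gamma> l\<close>]
    show "\<gamma> l * (cmod (cvec_inner D (a k) (a l)))\<^sup>2 \<le> 32 * \<gamma> l * real D * L"
      by (simp add: mult_ac)
  qed
  ultimately show ?thesis
    by blast
qed

theorem lemma3:
  "\<exists>c0::real. \<forall>(D::nat) (N::nat) (S::nat set) (\<gamma>::nat \<Rightarrow> real).
     1 \<le> N \<longrightarrow> 1 \<le> D \<longrightarrow>
     S \<subseteq> {..<N} \<longrightarrow>
     (\<forall>l<N. 0 \<le> \<gamma> l) \<longrightarrow>
     (\<forall>l<N. l \<notin> S \<longrightarrow> \<gamma> l = 0) \<longrightarrow>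
     8 * ln (real D * real N) < real D \<longrightarrow>
     measure (iid_sphere N D)
       {a \<in> space (iid_sphere N D).
          (\<forall>k<N. \<forall>l<N. k \<noteq> l \<longrightarrow>
             cmod ((1 / complex_of_real (real D)) * (\<Sum>i<D. cnj (a k i) * a l i))
               \<le> sqrt (32 * ln (real D * real N) / real D))
        \<and> (\<forall>k<N. k \<notin> S \<longrightarrow>
             (\<Sum>l\<in>S. \<gamma> l * (cmod (\<Sum>i<D. cnj (a k i) * a l i))\<^sup>2)
               \<le> (\<Sum>l\<in>S. 32 * \<gamma> l * real D * ln (real D * real N)))}
     \<ge> 1 - c0 / (real D * sqrt (real D))"
proof (intro exI[of _ 5] allI impI, goal_cases)
  case (1 D N S \<gamma>)
  note N = 1(1) and D = 1(2) and S = 1(3) and \<gamma> = 1(4) and small = 1(6)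
  let "_ \<le> measure _ ?G" = ?case
  define L where "L = ln (real D * real N)"
  have "0 \<le> L"
    using D N by (simp add: L_def mult_ge1_I)
  let ?good = "{a \<in> space (iid_sphere N D).
    \<forall>k<N. \<forall>l<N. k \<noteq> l \<longrightarrow> (cmod (cvec_inner D (a k) (a l)))\<^sup>2 \<le> 32 * L / real D * (real D)\<^sup>2}"
  have "?G = ?good"
    unfolding L_def[symmetric] cvec_inner_def[symmetric] using D S \<gamma>
    by (intro pairwise_inner_event_eq) auto
  moreover have "1 - (real N)\<^sup>2 * (exp (3 * real D / 4) / 4 ^ D + 4 * exp (- (32 * L / real D) * real D / 8))
      \<le> measure (iid_sphere N D) ?good"
    using \<open>0 \<le> L\<close> D by (intro measure_iid_sphere_pairwise_inner_le) simp
  moreover have "- (32 * L / real D) * real D / 8 = - 4 * ln (real D * real N)"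
    using D by (simp add: L_def)
  moreover note union_bound_small_norm_term_le[OF D N small] union_bound_half_plane_term_le[OF D N]
  ultimately show ?case
    by (simp add: distrib_left add_divide_distrib[symmetric])
qed

end
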